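(* Let $n_\text{in}\ge1$, $\mathbf{W}\in\mathbb{R}^{2\times n_\text{in}}$ with rows $\mathbf{W}_{1,:},\mathbf{W}_{2,:}$, $\mathbf{b}\in\mathbb{R}^{2}$, $\mathbf{c}\in\mathbb{R}^{n_\text{in}}$, $\mathbf{U}=[\mathbf{u}_1\,\ldots\,\mathbf{u}_{n_\text{in}}]\in\mathbb{R}^{n_\text{in}\times n_\text{in}}$, and $\mathcal{P}(\mathbf{U})=\{\mathbf{c}+\sum_j\lambda_j\mathbf{u}_j:\lambda\in[0,1]^{n_\text{in}}\}$. For $i\ge1$, let $N=2^i$ and partition $\mathcal{P}(\mathbf{U})$ (obtained by $i$ rounds of bisecting every cell along $\mathbf{u}_1$ with ratio $r=\tfrac12$) into the cells $\mathcal{P}_k=\{\mathbf{c}+\tfrac{k}{N}\mathbf{u}_1+\lambda_1\tfrac1N\mathbf{u}_1+\sum_{j\ge2}\lambda_j\mathbf{u}_j:\lambda\in[0,1]^{n_\text{in}}\}$, $k=0,\ldots,N-1$. Let $\mathcal{P}(\mathbf{V})$ and $\mathcal{P}(\mathbf{V}_k)$ be the images of $\mathcal{P}(\mathbf{U})$ and $\mathcal{P}_k$ under $\mathbf{x}\mapsto\mathbf{W}\mathbf{x}+\mathbf{b}$, and let $R_i=\mathrm{Vol}(\mathcal{B}(\mathbf{V}))-\mathrm{Vol}\big(\bigcup_{k=0}^{N-1}\mathcal{B}(\mathbf{V}_k)\big)$. Then \[ \lim_{i\to\infty}R_i=|\mathbf{W}_{1,:}\mathbf{u}_1|\,|\mathbf{W}_{2,:}\mathbf{u}_1|.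 \]
   Context: For a parallelotope $\mathcal{P}\subset\mathbb{R}^{2}$, $\mathcal{B}(\cdot)$ denotes the smallest axis-aligned rectangle containing it (the Cartesian product over coordinates of the interval between the minimal and maximal coordinate of its vertices); $\mathrm{Vol}$ is Lebesgue area. *)

theory Defs
  imports "HOL-Analysis.Analysis"
begin

definition par :: "real^'n \<Rightarrow> real^'n^'n \<Rightarrow> (real^'n) set" where
  "par c U = {c + (\<Sum>j\<in>UNIV. (l $ j) *\<^sub>R column j U) | l. \<forall>j. 0 \<le> l $ j \<and> l $ j \<le> 1}"

definition cell :: "real^'n \<Rightarrow> real^'n^'n \<Rightarrow> 'n \<Rightarrow> nat \<Rightarrow> nat \<Rightarrow> (real^'n) set" where
  "cell c U j1 N k = {c + (real k / real N) *\<^sub>R column j1 U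
       + ((l $ j1) * (1 / real N)) *\<^sub>R column j1 U
       + (\<Sum>j\<in>UNIV - {j1}. (l $ j) *\<^sub>R column j U) | l. \<forall>j. 0 \<le> l $ j \<and> l $ j \<le> 1}"

definition bbox :: "(real^2) set \<Rightarrow> (real^2) set" where
  "bbox S = cbox (\<chi> i. Inf ((\<lambda>x. x $ i) ` S)) (\<chi> i. Sup ((\<lambda>x. x $ i) ` S))"

end

theory Submission
  imports Defs
begin

text \<open>Each coordinate of an affine image of a parallelotope ranges over an interval whose length is
  the sum of the \<open>|W\<^sub>i\<^sub>,\<^sub>: u\<^sub>j|\<close>, so \<open>\<B>(V)\<close> has area \<open>(a\<^sub>1 + s\<^sub>1)(a\<^sub>2 + s\<^sub>2)\<close>, where \<open>a\<^sub>i = |W\<^sub>i\<^sub>,\<^sub>: u\<^sub>1|\<close> and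
  \<open>s\<^sub>i\<close> collects the remaining columns. The cells are parallelotopes themselves, so their boxes are
  translates of a single box with sides \<open>a\<^sub>i/N + s\<^sub>i\<close>, consecutive ones shifted by \<open>W u\<^sub>1 / N\<close>.
  Since the corners move along a line, each box meets the union of its predecessors exactly in its
  overlap with the immediately preceding box, a box with sides \<open>s\<^sub>i\<close>. Inclusion-exclusion gives the
  area \<open>N (a\<^sub>1/N + s\<^sub>1)(a\<^sub>2/N + s\<^sub>2) - (N - 1) s\<^sub>1 s\<^sub>2\<close> for the union, hence
  \<open>R\<^sub>i = a\<^sub>1 a\<^sub>2 (1 - 2\<^sup>-\<^sup>i)\<close>.\<close>

lemma measure_cbox_2:
  fixes a b :: "real^2"
  assumes "\<And>i. a$i \<le> b$i"
  shows "measure lebesgue (cbox a b) = (b$1 - a$1) * (b$2 - a$2)"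
proof -
  have "a \<in> cbox a b"
    using assms by (simp add: mem_box_cart)
  then have "cbox a b \<noteq> {}"
    by blast
  then have "measure lborel (cbox a b) = (\<Prod>i\<in>UNIV. b$i - a$i)"
    by (rule content_cbox_cart)
  then show ?thesis
    by (simp add: UNIV_2)
qed

lemma Int_translated_cbox_subset:
  fixes p q r H :: "real^'n"
  assumes "r \<in> closed_segment p q"
  shows "cbox p (p + H) \<inter> cbox q (q + H) \<subseteq> cbox r (r + H)"
proof
  fix x assume x: "x \<in> cbox p (p + H) \<inter> cbox q (q + H)"
  obtain u :: real where u: "0 \<le> u" "u \<le> 1" and r: "r = (1 - u) *\<^sub>R p + u *\<^sub>R q"
    using assms by (auto simp: in_segment)
  have r_between: "min (p$i) (q$i) \<le> r$i \<and> r$i \<le> max (p$i) (q$i)" for i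
  proof -
    have "u * min (p$i) (q$i) \<le> u * q$i" "u * q$i \<le> u * max (p$i) (q$i)"
         "(1 - u) * min (p$i) (q$i) \<le> (1 - u) * p$i" "(1 - u) * p$i \<le> (1 - u) * max (p$i) (q$i)"
      using u by (simp_all add: mult_left_mono)
    then show ?thesis
      by (simp add: r algebra_simps)
  qed
  show "x \<in> cbox r (r + H)"
    unfolding mem_box_cart
  proof
    fix i
    have "max (p$i) (q$i) \<le> x$i" "x$i \<le> min (p$i) (q$i) + H$i"
      using x by (auto simp: mem_box_cart min_add_distrib_left)
    then show "r$i \<le> x$i \<and> x$i \<le> (r + H)$i"
      using r_between[of i] by (simp add: max_def split: if_splits)
  qed
qed

lemma add_scaleR_in_closed_segment:
  fixes L D :: "'a::real_vector"
  assumes "s \<le> t" "t \<le> v"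
  shows "L + t *\<^sub>R D \<in> closed_segment (L + s *\<^sub>R D) (L + v *\<^sub>R D)"
proof (cases "s = v")
  case True
  then show ?thesis
    using assms by simp
next
  case False
  define u where "u = (t - s) / (v - s)"
  have "0 \<le> u" "u \<le> 1"
    using assms False by (simp_all add: u_def field_simps)
  moreover have "L + t *\<^sub>R D = (1 - u) *\<^sub>R (L + s *\<^sub>R D) + u *\<^sub>R (L + v *\<^sub>R D)"
  proof -
    have "u * (v - s) = t - s"
      using False by (simp add: u_def)
    then have "(1 - u) * s + u * v = t"
      by (simp add: algebra_simps)
    then show ?thesis
      by (simp add: algebra_simps flip: scaleR_add_left)
  qed
  ultimately show ?thesis
    by (auto simp: in_segment)
qed

lemma measure_UN_overlapping_chain:
  assumes meas: "\<And>k. A k \<in> fmeasurable M"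
    and measure_A: "\<And>k. measure M (A k) = a"
    and overlap: "\<And>k. k \<ge> 1 \<Longrightarrow> measure M (A k \<inter> (\<Union>j<k. A j)) = c"
    and "n \<ge> 1"
  shows "measure M (\<Union>k<n. A k) = real n * a - (real n - 1) * c"
  using \<open>n \<ge> 1\<close>
proof (induction n rule: dec_induct)
  case base
  then show ?case
    using measure_A[of 0] by (simp add: lessThan_Suc)
next
  case (step n)
  have "(\<Union>k<Suc n. A k) = (\<Union>k<n. A k) \<union> A n"
    by (auto simp: lessThan_Suc)
  moreover have "(\<Union>k<n. A k) \<in> fmeasurable M"
    using meas by auto
  ultimately have "measure M (\<Union>k<Suc n. A k) = measure M (\<Union>k<n. A k) + a - c"
    using measure_Un3[OF _ meas[of n]] measure_A[of n] overlap[OF step(1)] by (simp add: Int_commute)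
  then show ?case
    using step.IH by (simp add: algebra_simps)
qed

lemma measure_Union_translated_cboxes:
  fixes L D H :: "real^2"
  assumes D_le_H: "\<And>i. \<bar>D$i\<bar> \<le> H$i" and "M \<ge> 1"
  shows "measure lebesgue (\<Union>k<M. cbox (L + real k *\<^sub>R D) (L + real k *\<^sub>R D + H))
    = real M * (H$1 * H$2) - (real M - 1) * ((H$1 - \<bar>D$1\<bar>) * (H$2 - \<bar>D$2\<bar>))"
proof (rule measure_UN_overlapping_chain)
  define corner where "corner k = L + real k *\<^sub>R D" for k
  have H_nonneg: "0 \<le> H$i" for i
    using D_le_H[of i] by linarith
  show "measure lebesgue (cbox (corner k) (corner k + H)) = H$1 * H$2" for k
    using H_nonneg by (subst measure_cbox_2) auto
  show "measure lebesgue (cbox (corner k) (corner k + H) \<inter> (\<Union>j<k. cbox (corner j) (corner j + H)))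
      = (H$1 - \<bar>D$1\<bar>) * (H$2 - \<bar>D$2\<bar>)" if "k \<ge> 1" for k
  proof -
    define lo where "lo = (\<chi> i. max (corner k $ i) (corner (k - 1) $ i))"
    define hi where "hi = (\<chi> i. min (corner k $ i) (corner (k - 1) $ i) + H$i)"
    have "cbox (corner k) (corner k + H) \<inter> (\<Union>j<k. cbox (corner j) (corner j + H))
        = cbox (corner k) (corner k + H) \<inter> cbox (corner (k - 1)) (corner (k - 1) + H)"
    proof (intro equalityI subsetI)
      fix x assume "x \<in> cbox (corner k) (corner k + H) \<inter> (\<Union>j<k. cbox (corner j) (corner j + H))"
      then obtain j where "j < k" "x \<in> cbox (corner j) (corner j + H) \<inter> cbox (corner k) (corner k + H)"
        by blast
      moreover have "corner (k - 1) \<in> closed_segment (corner j) (corner k)"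
        unfolding corner_def using \<open>j < k\<close> by (intro add_scaleR_in_closed_segment) auto
      ultimately show "x \<in> cbox (corner k) (corner k + H) \<inter> cbox (corner (k - 1)) (corner (k - 1) + H)"
        using Int_translated_cbox_subset by blast
    next
      fix x assume "x \<in> cbox (corner k) (corner k + H) \<inter> cbox (corner (k - 1)) (corner (k - 1) + H)"
      then show "x \<in> cbox (corner k) (corner k + H) \<inter> (\<Union>j<k. cbox (corner j) (corner j + H))"
        using \<open>k \<ge> 1\<close> by auto
    qed
    also have "\<dots> = cbox lo hi"
      by (simp add: lo_def hi_def Int_interval_cart interval_cbox_cart min_add_distrib_left)
    also have "measure lebesgue (cbox lo hi) = (H$1 - \<bar>D$1\<bar>) * (H$2 - \<bar>D$2\<bar>)"
    proof -
      have "corner (k - 1) = corner k - D"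
        using \<open>k \<ge> 1\<close> by (simp add: corner_def algebra_simps)
      then have width: "hi$i - lo$i = H$i - \<bar>D$i\<bar>" for i
        by (auto simp: lo_def hi_def min_def max_def)
      have "lo$i \<le> hi$i" for i
        using width[of i] D_le_H[of i] by linarith
      then have "measure lebesgue (cbox lo hi) = (hi$1 - lo$1) * (hi$2 - lo$2)"
        by (rule measure_cbox_2)
      then show ?thesis
        by (simp add: width)
    qed
    finally show ?thesis .
  qed
qed (use \<open>M \<ge> 1\<close> in auto)

lemma Inf_Sup_affine_unit_cube:
  fixes K :: real and g :: "'n::finite \<Rightarrow> real"
  defines "S \<equiv> {K + (\<Sum>j\<in>UNIV. l$j * g j) | l::real^'n. \<forall>j. 0 \<le> l$j \<and> l$j \<le> 1}"
  shows "Inf S = K + (\<Sum>j\<in>UNIV. min 0 (g j))"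
    and "Sup S = K + (\<Sum>j\<in>UNIV. max 0 (g j))"
proof -
  have bounds: "min 0 (g j) \<le> l$j * g j \<and> l$j * g j \<le> max 0 (g j)"
    if "0 \<le> l$j" "l$j \<le> 1" for l :: "real^'n" and j
  proof (cases "g j \<ge> 0")
    case True
    then show ?thesis
      using that mult_right_mono[of "l$j" 1 "g j"] by simp
  next
    case False
    then show ?thesis
      using that mult_right_mono_neg[of "l$j" 1 "g j"] by (simp add: mult_nonneg_nonpos)
  qed
  have "K + (\<Sum>j\<in>UNIV. min 0 (g j)) \<in> S"
    unfolding S_def
    by (rule CollectI, rule exI[of _ "\<chi> j. if g j < 0 then 1 else 0"]) (auto intro!: sum.cong)
  then show "Inf S = K + (\<Sum>j\<in>UNIV. min 0 (g j))"
    by (rule cInf_eq_minimum) (auto simp: S_def bounds intro!: sum_mono)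
  have "K + (\<Sum>j\<in>UNIV. max 0 (g j)) \<in> S"
    unfolding S_def
    by (rule CollectI, rule exI[of _ "\<chi> j. if g j > 0 then 1 else 0"]) (auto intro!: sum.cong)
  then show "Sup S = K + (\<Sum>j\<in>UNIV. max 0 (g j))"
    by (rule cSup_eq_maximum) (auto simp: S_def bounds intro!: sum_mono)
qed

definition lower_offset :: "real^'n^'m \<Rightarrow> real^'n^'n \<Rightarrow> real^'m" where
  "lower_offset W U = (\<chi> i. \<Sum>j\<in>UNIV. min 0 ((W *v column j U)$i))"

definition extent :: "real^'n^'m \<Rightarrow> real^'n^'n \<Rightarrow> real^'m" where
  "extent W U = (\<chi> i. \<Sum>j\<in>UNIV. \<bar>(W *v column j U)$i\<bar>)"

lemma coordinate_image_affine_par: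
  fixes W :: "real^'n^'m"
  shows "(\<lambda>y. y$i) ` ((\<lambda>x. W *v x + b) ` par c U) =
    {(W *v c + b)$i + (\<Sum>j\<in>UNIV. l$j * (W *v column j U)$i) | l. \<forall>j. 0 \<le> l$j \<and> l$j \<le> 1}"
proof -
  have image_par: "h ` par c U = {h (c + (\<Sum>j\<in>UNIV. l$j *\<^sub>R column j U)) | l. \<forall>j. 0 \<le> l$j \<and> l$j \<le> 1}"
    for h :: "real^'n \<Rightarrow> real"
    unfolding par_def by blast
  have coordinate: "(W *v (c + (\<Sum>j\<in>UNIV. l$j *\<^sub>R column j U)) + b)$i
      = (W *v c + b)$i + (\<Sum>j\<in>UNIV. l$j * (W *v column j U)$i)" for l :: "real^'n"
    by (simp add: matrix_vector_right_distrib vec.sum matrix_vector_mult_scaleR)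
  show ?thesis
    unfolding image_image image_par coordinate ..
qed

lemma bbox_affine_image_par:
  fixes W :: "real^'n^2"
  shows "bbox ((\<lambda>x. W *v x + b) ` par c U)
    = cbox (W *v c + b + lower_offset W U) (W *v c + b + lower_offset W U + extent W U)"
proof -
  have "max 0 x = min 0 x + \<bar>x\<bar>" for x :: real
    by auto
  then show ?thesis
    unfolding bbox_def coordinate_image_affine_par Inf_Sup_affine_unit_cube lower_offset_def extent_def
    by (intro arg_cong2[where f = cbox]) (simp_all add: sum.distrib vec_eq_iff)
qed

lemma extent_nonneg: "0 \<le> extent W U $ i"
  by (simp add: extent_def sum_nonneg)

lemma measure_bbox_affine_image_par:
  fixes W :: "real^'n^2"
  shows "measure lebesgue (bbox ((\<lambda>x. W *v x + b) ` par c U)) = extent W U $ 1 * extent W U $ 2"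
  unfolding bbox_affine_image_par by (subst measure_cbox_2) (simp_all add: extent_nonneg)

lemma extent_remove:
  "extent W U $ i = \<bar>(W *v column j1 U)$i\<bar> + (\<Sum>j\<in>UNIV - {j1}. \<bar>(W *v column j U)$i\<bar>)"
  by (simp add: extent_def sum.remove[of UNIV j1])

definition scale_column :: "'n \<Rightarrow> real \<Rightarrow> real^'n^'n \<Rightarrow> real^'n^'n" where
  "scale_column j1 t U = (\<chi> r j. if j = j1 then t * U$r$j else U$r$j)"

lemma column_scale_column:
  "column j (scale_column j1 t U) = (if j = j1 then t *\<^sub>R column j U else column j U)"
  by (simp add: scale_column_def column_def vec_eq_iff)

lemma extent_scale_column:
  "extent W (scale_column j1 t U) $ i
    = \<bar>t\<bar> * \<bar>(W *v column j1 U)$i\<bar> + (\<Sum>j\<in>UNIV - {j1}. \<bar>(W *v column j U)$i\<bar>)"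
  by (simp add: extent_remove[of _ _ _ j1] column_scale_column matrix_vector_mult_scaleR abs_mult)

lemma cell_eq_par:
  fixes U :: "real^'n^'n"
  shows "cell c U j1 N k = par (c + (real k / real N) *\<^sub>R column j1 U) (scale_column j1 (1 / real N) U)"
proof -
  have "(\<Sum>j\<in>UNIV. l$j *\<^sub>R column j (scale_column j1 (1 / real N) U))
      = (l$j1 * (1 / real N)) *\<^sub>R column j1 U + (\<Sum>j\<in>UNIV - {j1}. l$j *\<^sub>R column j U)"
    for l :: "real^'n"
    by (simp add: sum.remove[of UNIV j1] column_scale_column)
  then show ?thesis
    unfolding cell_def par_def by (simp add: add.assoc)
qed

lemma measure_Union_bbox_affine_image_cells:
  fixes W :: "real^'n^2" and U :: "real^'n^'n" and j1 :: 'n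
  defines "a i \<equiv> \<bar>(W *v column j1 U)$i\<bar>"
    and "s i \<equiv> \<Sum>j\<in>UNIV - {j1}. \<bar>(W *v column j U)$i\<bar>"
  assumes "N \<ge> 1"
  shows "measure lebesgue (\<Union>k<N. bbox ((\<lambda>x. W *v x + b) ` cell c U j1 N k))
    = real N * ((a 1 / real N + s 1) * (a 2 / real N + s 2)) - (real N - 1) * (s 1 * s 2)"
proof -
  define U' where "U' = scale_column j1 (1 / real N) U"
  define L where "L = W *v c + b + lower_offset W U'"
  define D where "D = (1 / real N) *\<^sub>R (W *v column j1 U)"
  have H: "extent W U' $ i = a i / real N + s i" for i
    by (simp add: U'_def extent_scale_column a_def s_def)
  have D: "\<bar>D$i\<bar> = a i / real N" for i
    by (simp add: D_def a_def abs_mult)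
  have "0 \<le> s i" for i
    by (simp add: s_def sum_nonneg)
  then have D_le_H: "\<bar>D$i\<bar> \<le> extent W U' $ i" for i
    by (simp add: H D)
  have "bbox ((\<lambda>x. W *v x + b) ` cell c U j1 N k) = cbox (L + real k *\<^sub>R D) (L + real k *\<^sub>R D + extent W U')"
    for k
  proof -
    have "W *v (c + (real k / real N) *\<^sub>R column j1 U) + b + lower_offset W U' = L + real k *\<^sub>R D"
      by (simp add: L_def D_def algebra_simps)
    then show ?thesis
      unfolding cell_eq_par bbox_affine_image_par U'_def by simp
  qed
  then show ?thesis
    using measure_Union_translated_cboxes[OF D_le_H \<open>N \<ge> 1\<close>] by (simp add: H D)
qed

theorem lemma2:
  fixes W :: "real^'n^2" and b :: "real^2" and c :: "real^'n"
    and U :: "real^'n^'n" and j1 :: 'n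
  shows "(\<lambda>i::nat. measure lebesgue (bbox ((\<lambda>x. W *v x + b) ` par c U))
            - measure lebesgue (\<Union>k<2^i. bbox ((\<lambda>x. W *v x + b) ` cell c U j1 (2^i) k)))
         \<longlonglongrightarrow> \<bar>row 1 W \<bullet> column j1 U\<bar> * \<bar>row 2 W \<bullet> column j1 U\<bar>"
proof -
  define a where "a i = \<bar>(W *v column j1 U)$i\<bar>" for i
  define s where "s i = (\<Sum>j\<in>UNIV - {j1}. \<bar>(W *v column j U)$i\<bar>)" for i
  have par: "measure lebesgue (bbox ((\<lambda>x. W *v x + b) ` par c U)) = (a 1 + s 1) * (a 2 + s 2)"
    unfolding measure_bbox_affine_image_par extent_remove[of _ _ _ j1] a_def s_def ..
  have cells: "measure lebesgue (\<Union>k<N. bbox ((\<lambda>x. W *v x + b) ` cell c U j1 N k))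
      = real N * ((a 1 / real N + s 1) * (a 2 / real N + s 2)) - (real N - 1) * (s 1 * s 2)"
    if "N \<ge> 1" for N
    unfolding a_def s_def using that by (rule measure_Union_bbox_affine_image_cells)
  have "measure lebesgue (bbox ((\<lambda>x. W *v x + b) ` par c U))
      - measure lebesgue (\<Union>k<2^i. bbox ((\<lambda>x. W *v x + b) ` cell c U j1 (2^i) k))
      = a 1 * a 2 - a 1 * a 2 * (1 / 2) ^ i" for i :: nat
  proof -
    have "(1::nat) \<le> 2^i"
      by simp
    show ?thesis
      unfolding par cells[OF \<open>1 \<le> 2^i\<close>] by (simp add: field_simps)
  qed
  moreover have "(\<lambda>i. a 1 * a 2 - a 1 * a 2 * (1 / 2 :: real) ^ i) \<longlonglongrightarrow> a 1 * a 2 - a 1 * a 2 * 0"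
    by (intro tendsto_intros LIMSEQ_realpow_zero) auto
  moreover have "a i = \<bar>row i W \<bullet> column j1 U\<bar>" for i
    by (simp add: a_def matrix_vector_mul_component row_def)
  ultimately show ?thesis
    by simp
qed

end
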